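(* Let $\Gamma$ be the first Grigorchuk group with generators $a,b,c,d$, acting on the right on $\{0,1\}^{\mathbb N}$, and let $\rho=111\cdots$. For a word $w=w_1\cdots w_n$ over $\{a,b,c,d\}$ set $\delta(w)=\#\{\rho\,w_{i+1}\cdots w_n: i=0,\dots,n\}$, and let $\Delta(n)=\max\{\delta(w): w\text{ a word over }\{a,b,c,d\},\ |w|=n\}$. Let $\eta$ be the real root of $t^3+t^2+t-2$ and $\alpha=\log 2/\log(2/\eta)$. Then $\Delta(n)\preceq n^\alpha$.
   Context: The first Grigorchuk group $\Gamma$ is the group of permutations of $\{0,1\}^{\mathbb N}$ (acting on the right) generated by $a,b,c,d$, defined recursively for $x\in\{0,1\}$ and infinite binary sequences $u$ by: $(xu)a=(1-x)u$; $(0u)b=0(ua)$, $(1u)b=1(uc)$; $(0u)c=0(ua)$, $(1u)c=1(ud)$; $(0u)d=0u$, $(1u)d=1(ub)$. For functions $f,g:\mathbb N\to\mathbb R_+$, $g\preceq f$ means there is $C>0$ with $g(n)\le f(Cn)$ for all sufficiently large $n$. *)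

theory Defs
  imports Complex_Main
begin

datatype gen = GA | GB | GC | GD

text \<open>States of the defining automaton (the generators plus the identity SE).
  Binary digits: False = 0, True = 1.\<close>
datatype st = SA | SB | SC | SD | SE

fun st_of :: "gen \<Rightarrow> st" where
  "st_of GA = SA" | "st_of GB = SB" | "st_of GC = SC" | "st_of GD = SD"

fun st_out :: "st \<Rightarrow> bool \<Rightarrow> bool" where
  "st_out SA x = (\<not> x)"
| "st_out _ x = x"

text \<open>Next state after state q reads letter x:
  (xu)a = (1-x)u; (0u)b = 0(ua), (1u)b = 1(uc); (0u)c = 0(ua), (1u)c = 1(ud);
  (0u)d = 0u, (1u)d = 1(ub).\<close>
fun st_next :: "st \<Rightarrow> bool \<Rightarrow> st" where
  "st_next SA _ = SE"
| "st_next SB x = (if x then SC else SA)"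
| "st_next SC x = (if x then SD else SA)"
| "st_next SD x = (if x then SB else SE)"
| "st_next SE _ = SE"

fun st_at :: "st \<Rightarrow> (nat \<Rightarrow> bool) \<Rightarrow> nat \<Rightarrow> st" where
  "st_at q u 0 = q"
| "st_at q u (Suc k) = st_next (st_at q u k) (u k)"

definition act :: "(nat \<Rightarrow> bool) \<Rightarrow> gen \<Rightarrow> (nat \<Rightarrow> bool)" where
  "act u g = (\<lambda>k. st_out (st_at (st_of g) u k) (u k))"

definition act_word :: "(nat \<Rightarrow> bool) \<Rightarrow> gen list \<Rightarrow> (nat \<Rightarrow> bool)" where
  "act_word u w = foldl act u w"

definition rho :: "nat \<Rightarrow> bool" where
  "rho = (\<lambda>_. True)"

definition delta :: "gen list \<Rightarrow> nat" where
  "delta w = card {act_word rho (drop i w) | i. i \<le> length w}"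

definition Delta :: "nat \<Rightarrow> nat" where
  "Delta n = Max {delta w | w. length w = n}"

end

theory Submission
  imports Defs "HOL-Analysis.Convex"
begin

text \<open>Only the letters a move rho, and a word acting on sequences starting with
  the bit x acts on their tails by its section word. Hence, after multiplying out the
  blocks of letters b, c, d (which form a Klein four-group with the identity), the
  set of points rho w_(i+1) ... w_n embeds into the union of the corresponding sets
  for the two section words, and its size is at most 1 + the number of letters a.
  With the weights a = 1, b = \<kappa> - 1, c = \<kappa> \<eta> - 1, d = \<kappa> \<eta>^2 - 1, where
  \<kappa> = 1 / (1 - \<eta>^3), the two section words of a reduced word of weight N have total
  weight at most \<eta> (N + 1). A count f obeying f(x) \<le> f(y) + f(z) under such a
  contraction of weights is O((N + 1)^\<alpha>) with (\<eta>/2)^\<alpha> = 1/2, by concavity of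
  t^\<alpha>; and the weight of a word is at most \<kappa> times its length.\<close>

lemma powr_mean_le:
  fixes \<alpha> x y :: real
  assumes "0 \<le> \<alpha>" "\<alpha> \<le> 1" "0 < x" "0 < y"
  shows "x powr \<alpha> + y powr \<alpha> \<le> 2 * ((x + y) / 2) powr \<alpha>"
proof -
  define m where "m = (x + y) / 2"
  have m: "0 < m" using assms by (simp add: m_def)
  have "x powr \<alpha> * m powr (1 - \<alpha>) + y powr \<alpha> * m powr (1 - \<alpha>)
      \<le> (\<alpha> * x + (1 - \<alpha>) * m) + (\<alpha> * y + (1 - \<alpha>) * m)"
    using assms m by (intro add_mono Youngs_inequality_0) auto
  also have "\<dots> = 2 * m powr \<alpha> * m powr (1 - \<alpha>)"
    using m by (simp add: m_def algebra_simps flip: powr_add)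
  finally show ?thesis
    using m by (simp add: m_def flip: distrib_right)
qed

lemma powr_add_le_half:
  fixes \<alpha> c x :: real
  assumes "0 < \<alpha>" "\<alpha> < 1" "0 < c" and x: "(2 * c) powr (1 / (1 - \<alpha>)) \<le> x"
  shows "(x + c) powr \<alpha> \<le> x powr \<alpha> + 1 / 2"
proof -
  have x_pos: "0 < x"
    using assms by (smt (verit) powr_gt_zero)
  have "2 * c = ((2 * c) powr (1 / (1 - \<alpha>))) powr (1 - \<alpha>)"
    using assms by (simp add: powr_powr)
  also have "\<dots> \<le> x powr (1 - \<alpha>)"
    using assms by (intro powr_mono2) auto
  finally have large: "2 * c \<le> x powr (1 - \<alpha>)" .
  have "x + c = x * (1 + c / x)"
    using x_pos by (simp add: field_simps)
  then have "(x + c) powr \<alpha> = x powr \<alpha> * (1 + c / x) powr \<alpha>"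
    using x_pos assms by (simp add: powr_mult)
  also have "\<dots> \<le> x powr \<alpha> * (1 + c / x) powr 1"
    using x_pos assms by (intro mult_left_mono powr_mono) auto
  also have "\<dots> = x powr \<alpha> + c * (x powr \<alpha> / x)"
    using x_pos assms by (simp add: field_simps)
  also have "x powr \<alpha> / x = 1 / x powr (1 - \<alpha>)"
    using x_pos by (simp add: powr_diff)
  also have "c * (1 / x powr (1 - \<alpha>)) \<le> 1 / 2"
    using large assms x_pos by (simp add: field_simps)
  finally show ?thesis by simp
qed

definition branching_exponent :: "real \<Rightarrow> real" where
  "branching_exponent \<theta> = ln 2 / ln (2 / \<theta>)"

lemma branching_exponent_bounds:
  assumes "0 < \<theta>" "\<theta> < 1"
  shows "0 < branching_exponent \<theta>" "branching_exponent \<theta> < 1"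
proof -
  have ln2: "0 < ln (2 :: real)" by simp
  moreover have "ln 2 < ln (2 / \<theta>)"
    using assms by (simp add: field_simps)
  ultimately have "0 < ln (2 / \<theta>)" by linarith
  with ln2 \<open>ln 2 < ln (2 / \<theta>)\<close> show "0 < branching_exponent \<theta>" "branching_exponent \<theta> < 1"
    by (simp_all add: branching_exponent_def divide_less_eq_1_pos)
qed

lemma half_powr_branching_exponent:
  assumes "0 < \<theta>" "\<theta> < 2"
  shows "(\<theta> / 2) powr branching_exponent \<theta> = 1 / 2"
proof -
  have "0 < ln (2 / \<theta>)"
    using assms by simp
  moreover have "ln (\<theta> / 2) = - ln (2 / \<theta>)"
    using assms by (simp add: ln_div)
  ultimately have "branching_exponent \<theta> * ln (\<theta> / 2) = ln (1 / 2)"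
    by (simp add: branching_exponent_def ln_div)
  then show ?thesis
    using assms by (simp add: powr_def mult.commute)
qed

lemma powr_sum_le_contracted:
  fixes \<theta> s t x :: real
  defines "\<alpha> \<equiv> branching_exponent \<theta>"
  assumes "0 < \<theta>" "\<theta> < 1" "0 \<le> s" "0 \<le> t" and contracted: "s + t \<le> \<theta> * (x + 1)"
    and large: "(4 / \<theta>) powr (1 / (1 - \<alpha>)) \<le> x + 1"
  shows "(s + 1) powr \<alpha> + (t + 1) powr \<alpha> \<le> (x + 1) powr \<alpha> + 1 / 2"
proof -
  have \<alpha>: "0 < \<alpha>" "\<alpha> < 1"
    using assms branching_exponent_bounds by auto
  have "\<theta> / 2 * (x + 1 + 2 / \<theta>) = (\<theta> * (x + 1) + 2) / 2"
    using \<open>0 < \<theta>\<close> by (simp add: field_simps)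
  then have mean: "(s + t + 2) / 2 \<le> \<theta> / 2 * (x + 1 + 2 / \<theta>)"
    using contracted by simp
  have "(s + 1) powr \<alpha> + (t + 1) powr \<alpha> \<le> 2 * ((s + t + 2) / 2) powr \<alpha>"
    using powr_mean_le[of \<alpha> "s + 1" "t + 1"] assms \<alpha> by (simp add: add_ac)
  also have "\<dots> \<le> 2 * (\<theta> / 2 * (x + 1 + 2 / \<theta>)) powr \<alpha>"
    using mean \<alpha> assms by (simp add: powr_mono2)
  also have "\<dots> = 2 * (\<theta> / 2) powr \<alpha> * (x + 1 + 2 / \<theta>) powr \<alpha>"
    using mean assms by (simp only: mult.assoc powr_mult[of "\<theta> / 2"])
  also have "\<dots> = (x + 1 + 2 / \<theta>) powr \<alpha>"
    using half_powr_branching_exponent[of \<theta>] assms by simp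
  also have "\<dots> \<le> (x + 1) powr \<alpha> + 1 / 2"
    using powr_add_le_half[of \<alpha> "2 / \<theta>" "x + 1"] \<alpha> assms by simp
  finally show ?thesis .
qed

lemma nat_ceiling_less: "0 < a \<Longrightarrow> b \<le> a - 1 \<Longrightarrow> nat \<lceil>b\<rceil> < nat \<lceil>a\<rceil>"
  using ceiling_mono[of b "a - 1"] by simp

theorem branching_recursion_bound:
  fixes g N :: "'a \<Rightarrow> real" and \<theta> :: real
  assumes "0 < \<theta>" "\<theta> < 1"
    and N_nonneg: "\<And>x. 0 \<le> N x"
    and base: "\<And>x. g x \<le> 1 + N x"
    and branch: "\<And>x. \<exists>y z. g x \<le> g y + g z \<and> N y + N z \<le> \<theta> * (N x + 1)"
  shows "\<exists>A>0. \<forall>x. g x \<le> A * (N x + 1) powr branching_exponent \<theta>"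
proof -
  define \<alpha> where "\<alpha> = branching_exponent \<theta>"
  have \<alpha>: "0 < \<alpha>" "\<alpha> < 1"
    using assms branching_exponent_bounds by (auto simp: \<alpha>_def)
  define X where "X = max ((1 + \<theta>) / (1 - \<theta>)) ((4 / \<theta>) powr (1 / (1 - \<alpha>)))"
  define A where "A = 2 * (X + 1)"
  have X_pos: "0 < X"
    using assms by (simp add: X_def less_max_iff_disj)
  have bound: "g x \<le> A * (N x + 1) powr \<alpha> - A / 2" for x
  proof (induction "nat \<lceil>N x\<rceil>" arbitrary: x rule: less_induct)
    case less
    have grow: "1 \<le> (N x + 1) powr \<alpha>"
      using N_nonneg \<alpha> by (simp add: ge_one_powr_ge_zero)
    show ?case
    proof (cases "N x \<le> X")
      case True
      have "A * 1 \<le> A * (N x + 1) powr \<alpha>"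
        using grow X_pos by (intro mult_left_mono) (auto simp: A_def)
      moreover have "A / 2 = X + 1"
        by (simp add: A_def)
      ultimately show ?thesis
        using True base[of x] by linarith
    next
      case False
      obtain y z where split: "g x \<le> g y + g z" and contracted: "N y + N z \<le> \<theta> * (N x + 1)"
        using branch by blast
      have "(1 + \<theta>) / (1 - \<theta>) \<le> N x"
        using False by (simp add: X_def)
      then have "\<theta> * (N x + 1) \<le> N x - 1"
        using assms by (simp add: field_simps)
      then have "N y \<le> N x - 1" "N z \<le> N x - 1"
        using contracted N_nonneg[of y] N_nonneg[of z] by linarith+
      then have "g y \<le> A * (N y + 1) powr \<alpha> - A / 2" "g z \<le> A * (N z + 1) powr \<alpha> - A / 2"
        using False X_pos by (auto intro!: less nat_ceiling_less)
      then have "g x \<le> A * ((N y + 1) powr \<alpha> + (N z + 1) powr \<alpha>) - A"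
        using split by (simp add: algebra_simps)
      also have "\<dots> \<le> A * ((N x + 1) powr \<alpha> + 1 / 2) - A"
        using powr_sum_le_contracted[of \<theta> "N y" "N z" "N x"] assms contracted False X_pos
        by (simp add: A_def X_def \<alpha>_def)
      finally show ?thesis by (simp add: algebra_simps)
    qed
  qed
  have "0 < A"
    using X_pos by (simp add: A_def)
  moreover from this have "g x \<le> A * (N x + 1) powr \<alpha>" for x
    using bound[of x] by linarith
  ultimately show ?thesis
    unfolding \<alpha>_def by blast
qed

definition st_act :: "(nat \<Rightarrow> bool) \<Rightarrow> st \<Rightarrow> (nat \<Rightarrow> bool)" where
  "st_act u q = (\<lambda>k. st_out (st_at q u k) (u k))"

definition shift :: "(nat \<Rightarrow> bool) \<Rightarrow> (nat \<Rightarrow> bool)" where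
  "shift u = (\<lambda>k. u (Suc k))"

lemma st_at_Suc_shift: "st_at q u (Suc k) = st_at (st_next q (u 0)) (shift u) k"
  by (induction k) (auto simp: shift_def)

lemma st_act_0 [simp]: "st_act u q 0 = st_out q (u 0)"
  by (simp add: st_act_def)

lemma shift_st_act: "shift (st_act u q) = st_act (shift u) (st_next q (u 0))"
  by (simp only: shift_def st_act_def st_at_Suc_shift)

lemma st_act_Suc: "st_act u q (Suc k) = st_act (shift u) (st_next q (u 0)) k"
  using shift_st_act[of u q] by (metis shift_def)

lemma st_at_SE [simp]: "st_at SE u k = SE"
  by (induction k) auto

lemma st_act_SE [simp]: "st_act u SE = u"
  by (simp add: st_act_def)

lemma st_act_SA: "st_act u SA = (\<lambda>k. if k = 0 then \<not> u 0 else u k)"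
proof -
  have "st_at SA u k = (if k = 0 then SA else SE)" for k
    by (cases k) (simp_all add: st_at_Suc_shift del: st_at.simps(2))
  then show ?thesis by (auto simp: st_act_def fun_eq_iff)
qed

lemma st_act_SA_SA [simp]: "st_act (st_act u SA) SA = u"
  by (auto simp: st_act_SA fun_eq_iff)

lemma st_out_eq_if_not_SA: "q \<noteq> SA \<Longrightarrow> st_out q x = x"
  by (cases q) auto

lemma st_next_True_not_SA: "q \<noteq> SA \<Longrightarrow> st_next q True \<noteq> SA"
  by (cases q) simp_all

lemma st_act_rho: "q \<noteq> SA \<Longrightarrow> st_act rho q = rho"
proof -
  assume "q \<noteq> SA"
  then have "st_at q rho k \<noteq> SA" for k
    by (induction k) (auto simp: rho_def elim: st_next.elims)
  then show ?thesis by (auto simp: st_act_def fun_eq_iff rho_def st_out_eq_if_not_SA)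
qed

text \<open>Composition in the Klein four-group formed by the states b, c, d, e;
  the value SA is junk.\<close>

fun klein_mul :: "st \<Rightarrow> st \<Rightarrow> st" where
  "klein_mul SE q = q" | "klein_mul q SE = q"
| "klein_mul SB SB = SE" | "klein_mul SB SC = SD" | "klein_mul SB SD = SC"
| "klein_mul SC SB = SD" | "klein_mul SC SC = SE" | "klein_mul SC SD = SB"
| "klein_mul SD SB = SC" | "klein_mul SD SC = SB" | "klein_mul SD SD = SE"
| "klein_mul _ _ = SA"

lemma klein_mul_not_SA: "q \<noteq> SA \<Longrightarrow> r \<noteq> SA \<Longrightarrow> klein_mul q r \<noteq> SA"
  by (cases q; cases r) auto

lemma st_act_klein_mul:
  "q \<noteq> SA \<Longrightarrow> r \<noteq> SA \<Longrightarrow> st_act (st_act u q) r = st_act u (klein_mul q r)"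
proof (rule ext)
  fix k show "q \<noteq> SA \<Longrightarrow> r \<noteq> SA \<Longrightarrow> st_act (st_act u q) r k = st_act u (klein_mul q r) k"
  proof (induction k arbitrary: u q r)
    case 0
    then show ?case by (cases q; cases r) simp_all
  next
    case (Suc k)
    have lhs: "st_act (st_act u q) r (Suc k)
        = st_act (st_act (shift u) (st_next q (u 0))) (st_next r (u 0)) k"
      using Suc.prems by (simp add: st_act_Suc shift_st_act st_out_eq_if_not_SA)
    show ?case
    proof (cases "u 0")
      case True
      have "st_next (klein_mul q r) True = klein_mul (st_next q True) (st_next r True)"
        using Suc.prems by (cases q; cases r) simp_all
      then show ?thesis
        using True lhs Suc.IH Suc.prems st_next_True_not_SA by (simp add: st_act_Suc)
    next
      case False
      have "st_act (st_act v (st_next q False)) (st_next r False)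
          = st_act v (st_next (klein_mul q r) False)" for v
        using Suc.prems by (cases q; cases r) simp_all
      then show ?thesis using False lhs by (simp add: st_act_Suc)
    qed
  qed
qed

fun sections :: "bool \<Rightarrow> st list \<Rightarrow> st list" where
  "sections x [] = []"
| "sections x (q # qs) = st_next q x # sections (st_out q x) qs"

fun head_image :: "bool \<Rightarrow> st list \<Rightarrow> bool" where
  "head_image x [] = x"
| "head_image x (q # qs) = head_image (st_out q x) qs"

lemma length_sections [simp]: "length (sections x qs) = length qs"
  by (induction qs arbitrary: x) auto

lemma sections_append:
  "sections x (qs @ rs) = sections x qs @ sections (head_image x qs) rs"
  by (induction qs arbitrary: x) auto

lemma head_image_append: "head_image x (qs @ rs) = head_image (head_image x qs) rs"
  by (induction qs arbitrary: x) auto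

lemma st_out_Not: "st_out q (\<not> x) = (\<not> st_out q x)"
  by (cases q) auto

lemma head_image_Not: "head_image (\<not> x) qs = (\<not> head_image x qs)"
  by (induction qs arbitrary: x) (simp_all add: st_out_Not)

lemma foldl_st_act_0: "foldl st_act u qs 0 = head_image (u 0) qs"
  by (induction qs arbitrary: u) auto

lemma shift_foldl_st_act: "shift (foldl st_act u qs) = foldl st_act (shift u) (sections (u 0) qs)"
  by (induction qs arbitrary: u) (auto simp: shift_st_act)

lemma rho_apply [simp]: "rho k = True"
  by (simp add: rho_def)

lemma shift_rho [simp]: "shift rho = rho"
  by (simp add: shift_def rho_def)

definition suffix_orbit :: "st list \<Rightarrow> (nat \<Rightarrow> bool) set" where
  "suffix_orbit qs = {foldl st_act rho (drop i qs) | i. i \<le> length qs}"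

lemma suffix_orbit_eq_image: "suffix_orbit qs = (\<lambda>i. foldl st_act rho (drop i qs)) ` {..length qs}"
  by (auto simp: suffix_orbit_def)

lemma finite_suffix_orbit [simp]: "finite (suffix_orbit qs)"
  by (simp add: suffix_orbit_eq_image)

lemma suffix_orbit_Cons:
  "suffix_orbit (q # qs) = insert (foldl st_act rho (q # qs)) (suffix_orbit qs)"
  unfolding suffix_orbit_eq_image by (simp add: atMost_Suc_eq_insert_0 image_image)

text \<open>A point of the orbit is determined by its first letter and its tail, and
  the tail lies in the orbit of one of the two section words.\<close>

lemma card_suffix_orbit_le_sections:
  "card (suffix_orbit qs) \<le> card (suffix_orbit (sections True qs)) + card (suffix_orbit (sections False qs))"
proof -
  let ?split = "\<lambda>p :: nat \<Rightarrow> bool. (p 0, shift p)"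
  let ?part = "\<lambda>x. {head_image x qs} \<times> suffix_orbit (sections x qs)"
  have "?split ` suffix_orbit qs \<subseteq> ?part True \<union> ?part False"
  proof (rule image_subsetI)
    fix p assume "p \<in> suffix_orbit qs"
    then obtain i where i: "i \<le> length qs" and p: "p = foldl st_act rho (drop i qs)"
      by (auto simp: suffix_orbit_def)
    define y where "y = head_image True (take i qs)"
    have y: "head_image y (take i qs) = True"
      using head_image_Not[of True "take i qs"] by (cases y) (auto simp: y_def)
    have "drop i (sections y qs) = sections True (drop i qs)"
      using sections_append[of y "take i qs" "drop i qs"] i y by simp
    then have "shift (foldl st_act rho (drop i qs)) = foldl st_act rho (drop i (sections y qs))"
      by (simp add: shift_foldl_st_act)
    then have "shift (foldl st_act rho (drop i qs)) \<in> suffix_orbit (sections y qs)"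
      using i by (auto simp: suffix_orbit_def)
    moreover have "foldl st_act rho (drop i qs) 0 = head_image y qs"
      using head_image_append[of y "take i qs" "drop i qs"] y by (simp add: foldl_st_act_0)
    ultimately show "?split p \<in> ?part True \<union> ?part False"
      using p by (cases y) auto
  qed
  moreover have "inj ?split"
  proof (rule injI)
    fix p p' :: "nat \<Rightarrow> bool" assume "?split p = ?split p'"
    then have "p k = p' k" for k
      by (cases k) (auto simp: shift_def fun_eq_iff)
    then show "p = p'" ..
  qed
  ultimately have "card (suffix_orbit qs) \<le> card (?part True \<union> ?part False)"
    by (simp add: card_mono flip: card_image[OF inj_on_subset[OF _ subset_UNIV]])
  also have "\<dots> \<le> card (?part True) + card (?part False)"
    by (rule card_Un_le)
  finally show ?thesis by (simp add: card_cartesian_product_singleton)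
qed

text \<open>reduce a qs multiplies out the maximal blocks of non-a letters of a # qs
  in the Klein group, giving an alternating word x0 a x1 a ... a xk.\<close>

fun reduce :: "st \<Rightarrow> st list \<Rightarrow> st list" where
  "reduce x [] = [x]"
| "reduce x (q # qs) = (if q = SA then x # SA # reduce SE qs else reduce (klein_mul x q) qs)"

definition count_SA :: "st list \<Rightarrow> nat" where
  "count_SA qs = length (filter (\<lambda>q. q = SA) qs)"

lemma foldl_st_act_reduce:
  "x \<noteq> SA \<Longrightarrow> foldl st_act u (reduce x qs) = foldl st_act (st_act u x) qs"
  by (induction qs arbitrary: x u) (auto simp: st_act_klein_mul klein_mul_not_SA)

lemma suffix_orbit_subset_reduce:
  "x \<noteq> SA \<Longrightarrow> suffix_orbit qs \<subseteq> suffix_orbit (reduce x qs)"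
proof (induction qs arbitrary: x)
  case Nil
  then show ?case by (auto simp: suffix_orbit_def intro: exI[of _ 1])
next
  case (Cons q qs)
  show ?case
  proof (cases "q = SA")
    case True
    have "foldl st_act rho (q # qs) = foldl st_act rho (SA # reduce SE qs)"
      using True by (simp add: foldl_st_act_reduce)
    then show ?thesis
      using True Cons.IH[of SE] by (auto simp: suffix_orbit_Cons)
  next
    case False
    have "foldl st_act rho (q # qs) = foldl st_act rho qs"
      using False by (simp add: st_act_rho)
    moreover have "foldl st_act rho qs \<in> suffix_orbit qs"
      by (auto simp: suffix_orbit_def intro: exI[of _ 0])
    ultimately show ?thesis
      using False Cons.IH[of "klein_mul x q"] Cons.prems
      by (auto simp: suffix_orbit_Cons klein_mul_not_SA)
  qed
qed

text \<open>Only the letters a can produce new points, since b, c, d fix rho.\<close>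

lemma card_suffix_orbit_le_count_SA: "card (suffix_orbit qs) \<le> 1 + count_SA qs"
proof (induction qs)
  case Nil
  then show ?case by (simp add: suffix_orbit_def count_SA_def)
next
  case (Cons q qs)
  show ?case
  proof (cases "q = SA")
    case True
    then show ?thesis
      using Cons.IH card_insert_le_m1 by (simp add: suffix_orbit_Cons count_SA_def card_insert_if)
  next
    case False
    then have "foldl st_act rho (q # qs) \<in> suffix_orbit qs"
      by (auto simp: suffix_orbit_def st_act_rho intro: exI[of _ 0])
    then show ?thesis
      using Cons.IH False by (simp add: suffix_orbit_Cons count_SA_def insert_absorb)
  qed
qed

locale grigorchuk_root =
  fixes \<eta> :: real
  assumes root: "\<eta> ^ 3 + \<eta> ^ 2 + \<eta> - 2 = 0"
begin

lemma eta_pos: "0 < \<eta>"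
proof (rule ccontr)
  assume "\<not> 0 < \<eta>"
  moreover have "0 \<le> \<eta> ^ 2 + \<eta> + 1"
    using zero_le_power2[of "\<eta> + 1/2"] by (simp add: power2_eq_square algebra_simps)
  ultimately have "\<eta> * (\<eta> ^ 2 + \<eta> + 1) \<le> 0"
    by (simp add: mult_nonpos_nonneg)
  with root show False
    by (simp add: power2_eq_square power3_eq_cube algebra_simps)
qed

lemma eta_lt_1: "\<eta> < 1"
proof (rule ccontr)
  assume "\<not> \<eta> < 1"
  then have "1 \<le> \<eta> ^ 2" "1 \<le> \<eta> ^ 3"
    by (simp_all add: one_le_power)
  with root \<open>\<not> \<eta> < 1\<close> show False by linarith
qed

definition \<kappa> :: real where "\<kappa> = 1 / (1 - \<eta> ^ 3)"

lemma eta_cube_lt_1: "\<eta> ^ 3 < 1"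
  using eta_pos eta_lt_1 by (simp add: power_less_one_iff)

lemma kappa_mult: "\<kappa> * (1 - \<eta> ^ 3) = 1"
  using eta_cube_lt_1 by (simp add: \<kappa>_def)

lemma kappa_ge_1: "1 \<le> \<kappa>"
  using eta_cube_lt_1 eta_pos by (simp add: \<kappa>_def)

text \<open>The weights satisfy weight (q|0) + weight (q|1) = \<eta> (weight q + 1) for q = b, c, d:
  the sections q|1 run through c, d, b, and the values weight q + 1 = \<kappa>, \<kappa> \<eta>, \<kappa> \<eta>^2
  are successive multiples of \<eta>, cyclically because \<kappa> \<eta>^3 = \<kappa> - 1.\<close>

fun weight :: "st \<Rightarrow> real" where
  "weight SA = 1"
| "weight SB = \<kappa> - 1"
| "weight SC = \<kappa> * \<eta> - 1"
| "weight SD = \<kappa> * \<eta> ^ 2 - 1"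
| "weight SE = 0"

lemma kappa_root: "\<kappa> * \<eta> ^ 3 + \<kappa> * \<eta> ^ 2 + \<kappa> * \<eta> = 2 * \<kappa>"
proof -
  have "\<kappa> * (\<eta> ^ 3 + \<eta> ^ 2 + \<eta>) = \<kappa> * 2"
    using root by simp
  then show ?thesis by (simp add: algebra_simps)
qed

lemma weight_SD_eq: "weight SD = \<kappa> * (1 - \<eta>)"
proof -
  have "\<kappa> * \<eta> ^ 2 - 1 = \<kappa> * \<eta> ^ 2 - \<kappa> * (1 - \<eta> ^ 3)"
    by (simp add: kappa_mult)
  also have "\<dots> = \<kappa> * (1 - \<eta>)"
    using kappa_root by (simp add: algebra_simps)
  finally show ?thesis by simp
qed

lemma weight_SC_eq: "weight SC = \<kappa> * (1 - \<eta> ^ 2)"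
proof -
  have "\<kappa> * \<eta> - 1 = \<kappa> * \<eta> - \<kappa> * (1 - \<eta> ^ 3)"
    by (simp add: kappa_mult)
  also have "\<dots> = \<kappa> * (1 - \<eta> ^ 2)"
    using kappa_root by (simp add: algebra_simps)
  finally show ?thesis by simp
qed

lemma weight_nonneg: "0 \<le> weight q"
proof -
  have "0 \<le> 1 - \<eta> ^ 2" "0 \<le> 1 - \<eta>"
    using eta_pos eta_lt_1 by (simp_all add: power_le_one)
  then show ?thesis
    using kappa_ge_1 weight_SC_eq weight_SD_eq by (cases q) auto
qed

lemma weight_le_kappa: "weight q \<le> \<kappa>"
  using kappa_ge_1 eta_pos eta_lt_1 weight_SC_eq weight_SD_eq
  by (cases q) (auto simp: mult_left_le)

lemma weight_SB_eq: "weight SB = \<kappa> * \<eta> ^ 3"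
  using kappa_mult by (simp add: algebra_simps)

lemma weight_klein_mul:
  assumes "q \<noteq> SA" "r \<noteq> SA"
  shows "weight (klein_mul q r) \<le> weight q + weight r"
proof -
  have "\<eta> ^ 2 \<le> \<eta>"
    using eta_pos eta_lt_1 by (simp add: power2_eq_square mult_left_le)
  then have "\<eta> ^ 2 \<le> \<eta> ^ 3 + \<eta>"
    using eta_pos by (simp add: add_increasing)
  moreover have "\<eta> \<le> \<eta> ^ 3 + \<eta> ^ 2"
    using root eta_lt_1 by simp
  moreover have "\<eta> ^ 3 \<le> 2 - \<eta> ^ 2 - \<eta>"
    using root by simp
  ultimately have "\<kappa> * (1 - \<eta>) \<le> \<kappa> * \<eta> ^ 3 + \<kappa> * (1 - \<eta> ^ 2)"
    "\<kappa> * (1 - \<eta> ^ 2) \<le> \<kappa> * \<eta> ^ 3 + \<kappa> * (1 - \<eta>)"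
    "\<kappa> * \<eta> ^ 3 \<le> \<kappa> * (1 - \<eta> ^ 2) + \<kappa> * (1 - \<eta>)"
    using kappa_ge_1 by (simp_all flip: distrib_left)
  then show ?thesis
    using assms weight_nonneg[of q] weight_nonneg[of r]
    by (cases q; cases r) (simp_all add: add.commute weight_SB_eq weight_SC_eq weight_SD_eq
        del: weight.simps(2-4))
qed

definition section_weight :: "st \<Rightarrow> real" where
  "section_weight q = weight (st_next q True) + weight (st_next q False)"

lemma section_weight_le: "q \<noteq> SA \<Longrightarrow> section_weight q \<le> \<eta> * (weight q + 1)"
  using eta_pos kappa_mult
  by (cases q) (auto simp: section_weight_def algebra_simps power2_eq_square power3_eq_cube)

lemma section_weight_SA [simp]: "section_weight SA = 0"
  by (simp add: section_weight_def)

lemma sum_weight_sections: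
  "sum_list (map weight (sections x qs)) + sum_list (map weight (sections (\<not> x) qs))
     = sum_list (map section_weight qs)"
proof (induction qs arbitrary: x)
  case Nil
  then show ?case by simp
next
  case (Cons q qs)
  have "weight (st_next q x) + weight (st_next q (\<not> x)) = section_weight q"
    by (cases x) (simp_all add: section_weight_def)
  then show ?case
    using Cons.IH[of "st_out q x"] by (simp add: st_out_Not)
qed

text \<open>A reduced word has one more non-a letter than letters a, which pays for
  the additive constant in section_weight_le.\<close>

lemma sum_section_weight_reduce:
  "x \<noteq> SA \<Longrightarrow> sum_list (map section_weight (reduce x qs))
     \<le> \<eta> * (sum_list (map weight (reduce x qs)) + 1)"
proof (induction qs arbitrary: x)
  case Nil
  then show ?case using section_weight_le by simp
next
  case (Cons q qs)
  show ?case
  proof (cases "q = SA")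
    case True
    then show ?thesis
      using Cons.IH[of SE] section_weight_le[OF Cons.prems] by (simp add: algebra_simps)
  next
    case False
    then show ?thesis
      using Cons.IH klein_mul_not_SA[OF Cons.prems] by simp
  qed
qed

lemma sum_weight_reduce_le:
  "x \<noteq> SA \<Longrightarrow> sum_list (map weight (reduce x qs)) \<le> weight x + sum_list (map weight qs)"
proof (induction qs arbitrary: x)
  case (Cons q qs)
  show ?case
  proof (cases "q = SA")
    case True
    then show ?thesis using Cons.IH[of SE] by simp
  next
    case False
    then show ?thesis
      using Cons.IH[of "klein_mul x q"] weight_klein_mul[OF Cons.prems False]
      by (simp add: klein_mul_not_SA[OF Cons.prems])
  qed
qed simp

lemma count_SA_le_sum_weight_reduce: "real (count_SA qs) \<le> sum_list (map weight (reduce x qs))"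
  by (induction qs arbitrary: x) (auto simp: count_SA_def weight_nonneg add_increasing)

definition reduced_weight :: "st list \<Rightarrow> real" where
  "reduced_weight qs = sum_list (map weight (reduce SE qs))"

lemma reduced_weight_nonneg: "0 \<le> reduced_weight qs"
  unfolding reduced_weight_def by (rule sum_list_nonneg) (auto simp: weight_nonneg)

lemma reduced_weight_le_length: "reduced_weight qs \<le> \<kappa> * length qs"
proof -
  have "sum_list (map weight qs) \<le> \<kappa> * length qs"
    using sum_list_mono[of qs weight "\<lambda>_. \<kappa>"] weight_le_kappa by (simp add: sum_list_triv mult.commute)
  then show ?thesis
    using sum_weight_reduce_le[of SE qs] by (simp add: reduced_weight_def)
qed

lemma reduced_weight_sections_le:
  fixes qs :: "st list"
  defines "r \<equiv> reduce SE qs"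
  shows "reduced_weight (sections True r) + reduced_weight (sections False r)
    \<le> \<eta> * (reduced_weight qs + 1)"
proof -
  have "reduced_weight (sections True r) + reduced_weight (sections False r)
      \<le> sum_list (map weight (sections True r)) + sum_list (map weight (sections (\<not> True) r))"
    using sum_weight_reduce_le[of SE] by (simp add: reduced_weight_def add_mono)
  also have "\<dots> = sum_list (map section_weight r)"
    by (rule sum_weight_sections)
  also have "\<dots> \<le> \<eta> * (reduced_weight qs + 1)"
    using sum_section_weight_reduce[of SE qs] by (simp add: r_def reduced_weight_def)
  finally show ?thesis .
qed

lemma card_suffix_orbit_le_reduced_weight: "real (card (suffix_orbit qs)) \<le> 1 + reduced_weight qs"
  using card_suffix_orbit_le_count_SA[of qs] count_SA_le_sum_weight_reduce[of qs SE]
  by (simp add: reduced_weight_def)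

end

lemma delta_eq_card_suffix_orbit: "delta w = card (suffix_orbit (map st_of w))"
proof -
  have act_eq: "foldl act u v = foldl st_act u (map st_of v)" for u v
    by (induction v arbitrary: u) (simp_all add: act_def st_act_def)
  show ?thesis
    by (simp add: delta_def suffix_orbit_def act_word_def act_eq drop_map)
qed

lemma Delta_attained: "\<exists>w. length w = n \<and> Delta n = delta w"
proof -
  have "finite (UNIV :: gen set)"
    by (rule finite_subset[of _ "{GA, GB, GC, GD}"]) (use gen.exhaust in auto)
  then have "finite {w :: gen list. length w = n}"
    using finite_lists_length_eq[of "UNIV :: gen set" n] by simp
  then have "finite {delta w | w. length w = n}"
    by (simp add: setcompr_eq_image)
  moreover have "{delta w | w. length w = n} \<noteq> {}"
    by (auto intro!: exI[of _ "replicate n GA"])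
  ultimately have "Delta n \<in> {delta w | w. length w = n}"
    unfolding Delta_def by (rule Max_in)
  then show ?thesis by auto
qed

context grigorchuk_root
begin

lemma card_suffix_orbit_bound:
  "\<exists>A>0. \<forall>qs. real (card (suffix_orbit qs)) \<le> A * (reduced_weight qs + 1) powr branching_exponent \<eta>"
proof (rule branching_recursion_bound)
  show "0 < \<eta>" by (fact eta_pos)
  show "\<eta> < 1" by (fact eta_lt_1)
  show "0 \<le> reduced_weight qs" for qs by (fact reduced_weight_nonneg)
  show "real (card (suffix_orbit qs)) \<le> 1 + reduced_weight qs" for qs
    by (fact card_suffix_orbit_le_reduced_weight)
  fix qs
  let ?r = "reduce SE qs"
  have "card (suffix_orbit qs) \<le> card (suffix_orbit ?r)"
    by (simp add: card_mono suffix_orbit_subset_reduce)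
  also have "\<dots> \<le> card (suffix_orbit (sections True ?r)) + card (suffix_orbit (sections False ?r))"
    by (rule card_suffix_orbit_le_sections)
  finally show "\<exists>y z. real (card (suffix_orbit qs))
      \<le> real (card (suffix_orbit y)) + real (card (suffix_orbit z))
      \<and> reduced_weight y + reduced_weight z \<le> \<eta> * (reduced_weight qs + 1)"
    using reduced_weight_sections_le[of qs]
    by (intro exI[of _ "sections True ?r"] exI[of _ "sections False ?r"]) simp
qed

lemma Delta_bound: "\<exists>C>0. \<forall>n\<ge>1. real (Delta n) \<le> (C * real n) powr branching_exponent \<eta>"
proof -
  define \<alpha> where "\<alpha> = branching_exponent \<eta>"
  have \<alpha>: "0 < \<alpha>"
    using branching_exponent_bounds eta_pos eta_lt_1 by (simp add: \<alpha>_def)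
  obtain A where A: "0 < A"
    and bound: "\<And>qs. real (card (suffix_orbit qs)) \<le> A * (reduced_weight qs + 1) powr \<alpha>"
    using card_suffix_orbit_bound unfolding \<alpha>_def by blast
  define C where "C = A powr (1 / \<alpha>) * (\<kappa> + 1)"
  have "real (Delta n) \<le> (C * real n) powr \<alpha>" if "1 \<le> n" for n
  proof -
    obtain w where w: "length w = n" "Delta n = delta w"
      using Delta_attained by blast
    have "reduced_weight (map st_of w) + 1 \<le> (\<kappa> + 1) * real n"
      using reduced_weight_le_length[of "map st_of w"] w that by (simp add: algebra_simps)
    then have "(reduced_weight (map st_of w) + 1) powr \<alpha> \<le> ((\<kappa> + 1) * real n) powr \<alpha>"
      using reduced_weight_nonneg \<alpha> by (intro powr_mono2) (auto simp: add_nonneg_nonneg)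
    then have "A * (reduced_weight (map st_of w) + 1) powr \<alpha> \<le> A * ((\<kappa> + 1) * real n) powr \<alpha>"
      using A by simp
    then have "real (Delta n) \<le> A * ((\<kappa> + 1) * real n) powr \<alpha>"
      using bound[of "map st_of w"] w by (simp add: delta_eq_card_suffix_orbit)
    also have "\<dots> = (C * real n) powr \<alpha>"
      using A \<alpha> kappa_ge_1 by (simp add: C_def powr_mult powr_powr mult.assoc)
    finally show ?thesis .
  qed
  moreover have "0 < C"
    using A kappa_ge_1 by (simp add: C_def)
  ultimately show ?thesis
    unfolding \<alpha>_def by blast
qed

end

theorem proposition4p4:
  fixes \<eta> :: real
  assumes "\<eta> ^ 3 + \<eta> ^ 2 + \<eta> - 2 = 0"
  shows "\<exists>C>0. \<forall>\<^sub>F n in sequentially.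
           real (Delta n) \<le> (C * real n) powr (ln 2 / ln (2 / \<eta>))"
proof -
  interpret grigorchuk_root \<eta>
    using assms by unfold_locales
  obtain C where "0 < C" "\<forall>n\<ge>1. real (Delta n) \<le> (C * real n) powr branching_exponent \<eta>"
    using Delta_bound by blast
  then show ?thesis
    unfolding branching_exponent_def by (blast intro: eventually_sequentiallyI)
qed

end
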